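(* Let $\mathrm{End}(P_2)$ be the differential graded algebra of morphisms $P_2\to P_2$ of all homological degrees in $\mathrm{Kom}(2)$, with differential the graded commutator with the differential of $P_2$ and product composition, so that its homology is the algebra of homotopy classes of chain maps $P_2\to P_2$. With $\mathbb Z$ coefficients and $\alpha=0$, $$H(\mathrm{End}(P_2))\cong\mathbb Z[u]\oplus\mathbb Z[u]\cdot w\oplus\big(\mathbb Z[u]/(2u)\big)\cdot b$$ as a $\mathbb Z[u]$-module; the multiplication is commutative, with unit the identity, and determined by $w\cdot b=b^2=w^2=0$. Here the classes are represented by the following chain maps (a map of homological degree $-k$ has components $C_{n+k}\to C_n$): $b$ (degree $0$) has component $C_0\to C_0$ the identity of $\mathbb 1$ with a dot on the left strand and components $C_n\to C_n$ ($n\ge1$) equal to $x_{\mathrm{top}}$; $u$ (degree $-2$) has component $C_2\to C_0$ the saddle $e_1\to\mathbb 1$ and components $C_{n+2}\to C_n$ ($n\ge1$) the identity of $e_1$; $w$ (degree $-3$) has component $C_3\to C_0$ the saddle $e_1\to\mathbb 1$ with a dot and components $C_{n+3}\to C_n$ ($n\ge1$) equal to $x_{\mathrm{top}}$.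
   Context: $\mathrm{Kom}(2)$: bounded-below chain complexes over Bar-Natan's dotted cobordism category with 4 boundary points (2 on top, 2 on bottom), over $\mathbb Z[\alpha]$, relations: sphere $=0$, one-dotted sphere $=1$, two-dotted sphere $=0$, three-dotted sphere $=\alpha$, neck-cutting. $\mathbb 1$ = two vertical strands, $e_1$ = cap joining top points over cup joining bottom points, $s:\mathbb 1\to qe_1$ the saddle, $x_{\mathrm{top}},x_{\mathrm{bot}}:e_1\to e_1$ the identity with a dot on the top arc, resp. bottom arc. $P_2$ has chain groups $C_0=\mathbb 1$, $C_n=q^{2n-1}e_1$ ($n\ge1$, homological degree $n$), differentials $d_0=s$, $d_n=x_{\mathrm{top}}-x_{\mathrm{bot}}$ for odd $n$, $d_n=x_{\mathrm{top}}+x_{\mathrm{bot}}$ for even $n\ge2$. *)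

theory Defs
  imports Main "HOL-Library.Function_Algebras" "HOL-Computational_Algebra.Polynomial"
begin

text \<open>Objects: the two crossingless matchings with 2 top and 2 bottom points.
  One = two vertical strands (the identity tangle), E1 = cap over cup.\<close>
datatype obj = One | E1

text \<open>Basis dotted cobordisms (every cobordism reduces to a Z-combination of these by
  neck cutting and the sphere relations):
  D1 a b  : identity of One with a dot on the left strand iff a, on the right strand iff b;
  DE a b  : identity of E1 with a dot on the top arc iff a, on the bottom arc iff b;
  Sd a    : the saddle One -> E1, with one dot iff a;
  Sd' a   : the saddle E1 -> One, with one dot iff a.\<close>
datatype cob = D1 bool bool | DE bool bool | Sd bool | Sd' bool

fun src :: "cob \<Rightarrow> obj" where
  "src (D1 a b) = One" | "src (DE a b) = E1" | "src (Sd a) = One" | "src (Sd' a) = E1"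

fun tgt :: "cob \<Rightarrow> obj" where
  "tgt (D1 a b) = One" | "tgt (DE a b) = E1" | "tgt (Sd a) = E1" | "tgt (Sd' a) = One"

definition cobs :: "cob set" where
  "cobs = {D1 False False, D1 True False, D1 False True, D1 True True,
           DE False False, DE True False, DE False True, DE True True,
           Sd False, Sd True, Sd' False, Sd' True}"

type_synonym mor = "cob \<Rightarrow> int"

definition bas :: "cob \<Rightarrow> mor" where
  "bas c = (\<lambda>c'. if c' = c then 1 else 0)"

definition hom :: "obj \<Rightarrow> obj \<Rightarrow> mor set" where
  "hom X Y = {F. \<forall>c. F c \<noteq> 0 \<longrightarrow> src c = X \<and> tgt c = Y}"

definition nd :: "bool \<Rightarrow> nat" where "nd a = (if a then 1 else 0)"

text \<open>Composition of basis cobordisms, f after g (alpha = 0, so a doubly dotted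
  component vanishes; neck cutting gives saddle' o saddle = x_L + x_R and
  saddle o saddle' = x_top + x_bot).\<close>
fun bcomp :: "cob \<Rightarrow> cob \<Rightarrow> mor" where
  "bcomp (D1 a b) (D1 c d) = (if (a \<and> c) \<or> (b \<and> d) then 0 else bas (D1 (a \<or> c) (b \<or> d)))"
| "bcomp (DE a b) (DE c d) = (if (a \<and> c) \<or> (b \<and> d) then 0 else bas (DE (a \<or> c) (b \<or> d)))"
| "bcomp (Sd a) (D1 c d) = (if nd a + nd c + nd d \<ge> 2 then 0 else bas (Sd (a \<or> c \<or> d)))"
| "bcomp (DE c d) (Sd a) = (if nd a + nd c + nd d \<ge> 2 then 0 else bas (Sd (a \<or> c \<or> d)))"
| "bcomp (Sd' a) (DE c d) = (if nd a + nd c + nd d \<ge> 2 then 0 else bas (Sd' (a \<or> c \<or> d)))"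
| "bcomp (D1 c d) (Sd' a) = (if nd a + nd c + nd d \<ge> 2 then 0 else bas (Sd' (a \<or> c \<or> d)))"
| "bcomp (Sd' a) (Sd b) =
     (if nd a + nd b = 0 then bas (D1 True False) + bas (D1 False True)
      else if nd a + nd b = 1 then bas (D1 True True) else 0)"
| "bcomp (Sd a) (Sd' b) =
     (if nd a + nd b = 0 then bas (DE True False) + bas (DE False True)
      else if nd a + nd b = 1 then bas (DE True True) else 0)"
| "bcomp _ _ = 0"

definition mcomp :: "mor \<Rightarrow> mor \<Rightarrow> mor" where
  "mcomp F G = (\<lambda>c. \<Sum>f\<in>cobs. \<Sum>g\<in>cobs. F f * G g * bcomp f g c)"

section \<open>The complex P_2 (q-gradings suppressed)\<close>

definition Cobj :: "nat \<Rightarrow> obj" where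
  "Cobj n = (if n = 0 then One else E1)"

text \<open>dP n : C_n -> C_(n+1)\<close>
definition dP :: "nat \<Rightarrow> mor" where
  "dP n = (if n = 0 then bas (Sd False)
           else if odd n then bas (DE True False) - bas (DE False True)
           else bas (DE True False) + bas (DE False True))"

text \<open>An element F of End(P_2): F d m is the component C_m -> C_(m+d) of its
  homogeneous part of homological degree d (a map of degree -k in the paper's
  convention has d = -k).  End(P_2) is the direct sum over d, hence finite support in d.\<close>
type_synonym endo = "int \<Rightarrow> nat \<Rightarrow> mor"

definition EndP :: "endo set" where
  "EndP = {F. finite {d. F d \<noteq> 0} \<and>
      (\<forall>d m. if int m + d \<ge> 0 then F d m \<in> hom (Cobj m) (Cobj (nat (int m + d)))
             else F d m = 0)}"

definition sgn_int :: "int \<Rightarrow> int" where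
  "sgn_int e = (if even e then 1 else -1)"

definition dEnd :: "endo \<Rightarrow> endo" where
  "dEnd F = (\<lambda>d m.
     (if int m + d - 1 \<ge> 0 then mcomp (dP (nat (int m + d - 1))) (F (d - 1) m) else 0)
     - (\<lambda>c. sgn_int (d - 1) * (if int m + d \<ge> 0 then mcomp (F (d - 1) (Suc m)) (dP m) else 0) c))"

definition ecomp :: "endo \<Rightarrow> endo \<Rightarrow> endo" where
  "ecomp F G = (\<lambda>d m. \<Sum>e\<in>{e. G e \<noteq> 0}.
      if int m + e \<ge> 0 then mcomp (F (d - e) (nat (int m + e))) (G e m) else 0)"

definition IdP :: endo where
  "IdP = (\<lambda>d m. if d = 0 then (if m = 0 then bas (D1 False False) else bas (DE False False)) else 0)"

definition smul :: "int \<Rightarrow> endo \<Rightarrow> endo" where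
  "smul c F = (\<lambda>d m x. c * F d m x)"

primrec epow :: "endo \<Rightarrow> nat \<Rightarrow> endo" where
  "epow F 0 = IdP"
| "epow F (Suc n) = ecomp F (epow F n)"

definition pev :: "int poly \<Rightarrow> endo \<Rightarrow> endo" where
  "pev p X = (\<Sum>i\<le>degree p. smul (coeff p i) (epow X i))"

definition Cyc :: "endo set" where
  "Cyc = {F \<in> EndP. dEnd F = 0}"

definition Bd :: "endo set" where
  "Bd = dEnd ` EndP"

definition bP :: endo where
  "bP = (\<lambda>d m. if d = 0 then (if m = 0 then bas (D1 True False) else bas (DE True False)) else 0)"

definition uP :: endo where
  "uP = (\<lambda>d m. if d = -2 \<and> m = 2 then bas (Sd' False)
               else if d = -2 \<and> m \<ge> 3 then bas (DE False False) else 0)"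

definition wP :: endo where
  "wP = (\<lambda>d m. if d = -3 \<and> m = 3 then bas (Sd' True)
               else if d = -3 \<and> m \<ge> 4 then bas (DE True False) else 0)"

definition Phi :: "int poly \<Rightarrow> int poly \<Rightarrow> int poly \<Rightarrow> endo" where
  "Phi p q r = pev p uP + ecomp (pev q uP) wP + ecomp (pev r uP) bP"

end

theory Submission
  imports Defs
begin

text \<open>A map \<open>P\<^sub>2 \<rightarrow> P\<^sub>2\<close> of degree \<open>d\<close> is a family of components \<open>C\<^sub>m \<rightarrow> C\<^sub>m\<^sub>+\<^sub>d\<close>, and a cycle is
  null-homotopic as soon as a homotopy can be built one source degree at a time, each step lifting a
  map along the differential \<open>d\<^sub>m\<close> of \<open>P\<^sub>2\<close>. Such lifts always exist except into \<open>C\<^sub>0\<close>, where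
  precomposition with \<open>d\<^sub>m\<close> reaches exactly the maps satisfying an explicit condition; in particular
  for even \<open>m > 0\<close> it reaches the dotted saddle only with even coefficients. Hence a cycle is a
  boundary iff its components \<open>C\<^sub>m \<rightarrow> C\<^sub>0\<close> satisfy these conditions. The components \<open>C\<^sub>m \<rightarrow> C\<^sub>0\<close> of
  the cycles \<open>u\<^sup>i\<close>, \<open>u\<^sup>i w\<close>, \<open>u\<^sup>i b\<close> are the identity, the saddle and the dotted saddle, which
  account for all of them; this yields both the generators and the relations, including the
  2-torsion of \<open>\<int>[u] b\<close>. Commutativity follows from the Leibniz rule, which makes products with
  boundaries boundaries, and from the generators composing like monomials.\<close>

section \<open>Morphisms of the cobordism category\<close>

text \<open>Simplification with the pointwise rules of \<open>Function_Algebras\<close> can leave the zero morphism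
  in the eta-expanded form \<open>\<lambda>_. 0\<close>; this folds it back.\<close>
lemma lambda_zero [simp]: "(\<lambda>_. 0) = (0::mor)" "(\<lambda>_. 0) = (0::nat \<Rightarrow> mor)" "(\<lambda>_. 0) = (0::endo)"
  by (simp_all add: fun_eq_iff)

lemma cobs_UNIV: "cobs = UNIV"
proof -
  have "c \<in> cobs" for c by (cases c) (auto simp: cobs_def)
  then show ?thesis by auto
qed

lemma finite_cob: "finite (UNIV :: cob set)"
  by (simp add: cobs_UNIV[symmetric] cobs_def)

lemma all_cob:
  "(\<forall>c. P c) \<longleftrightarrow> P (D1 False False) \<and> P (D1 False True) \<and> P (D1 True False) \<and> P (D1 True True)
    \<and> P (DE False False) \<and> P (DE False True) \<and> P (DE True False) \<and> P (DE True True)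
    \<and> P (Sd False) \<and> P (Sd True) \<and> P (Sd' False) \<and> P (Sd' True)"
  by (metis (full_types) cob.exhaust)

lemma mor_eq_iff:
  "(F::mor) = G \<longleftrightarrow> F (D1 False False) = G (D1 False False) \<and> F (D1 False True) = G (D1 False True)
    \<and> F (D1 True False) = G (D1 True False) \<and> F (D1 True True) = G (D1 True True)
    \<and> F (DE False False) = G (DE False False) \<and> F (DE False True) = G (DE False True)
    \<and> F (DE True False) = G (DE True False) \<and> F (DE True True) = G (DE True True)
    \<and> F (Sd False) = G (Sd False) \<and> F (Sd True) = G (Sd True)
    \<and> F (Sd' False) = G (Sd' False) \<and> F (Sd' True) = G (Sd' True)"
  by (simp only: fun_eq_iff all_cob)

lemma mcomp_coeff:
  "mcomp F G (D1 False False) = F (D1 False False) * G (D1 False False)"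
  "mcomp F G (D1 False True) = F (D1 False False) * G (D1 False True)
     + F (D1 False True) * G (D1 False False) + F (Sd' False) * G (Sd False)"
  "mcomp F G (D1 True False) = F (D1 False False) * G (D1 True False)
     + F (D1 True False) * G (D1 False False) + F (Sd' False) * G (Sd False)"
  "mcomp F G (D1 True True) = F (D1 False False) * G (D1 True True)
     + F (D1 False True) * G (D1 True False) + F (D1 True False) * G (D1 False True)
     + F (D1 True True) * G (D1 False False) + F (Sd' False) * G (Sd True) + F (Sd' True) * G (Sd False)"
  "mcomp F G (DE False False) = F (DE False False) * G (DE False False)"
  "mcomp F G (DE False True) = F (DE False False) * G (DE False True)
     + F (DE False True) * G (DE False False) + F (Sd False) * G (Sd' False)"
  "mcomp F G (DE True False) = F (DE False False) * G (DE True False)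
     + F (DE True False) * G (DE False False) + F (Sd False) * G (Sd' False)"
  "mcomp F G (DE True True) = F (DE False False) * G (DE True True)
     + F (DE False True) * G (DE True False) + F (DE True False) * G (DE False True)
     + F (DE True True) * G (DE False False) + F (Sd False) * G (Sd' True) + F (Sd True) * G (Sd' False)"
  "mcomp F G (Sd False) = F (DE False False) * G (Sd False) + F (Sd False) * G (D1 False False)"
  "mcomp F G (Sd True) = F (DE False False) * G (Sd True) + F (DE False True) * G (Sd False)
     + F (DE True False) * G (Sd False) + F (Sd False) * G (D1 False True)
     + F (Sd False) * G (D1 True False) + F (Sd True) * G (D1 False False)"
  "mcomp F G (Sd' False) = F (D1 False False) * G (Sd' False) + F (Sd' False) * G (DE False False)"
  "mcomp F G (Sd' True) = F (D1 False False) * G (Sd' True) + F (D1 False True) * G (Sd' False)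
     + F (D1 True False) * G (Sd' False) + F (Sd' False) * G (DE False True)
     + F (Sd' False) * G (DE True False) + F (Sd' True) * G (DE False False)"
  by (simp_all add: mcomp_def cobs_def bas_def nd_def)

lemma mcomp_bas: "mcomp (bas f) (bas g) = bcomp f g"
proof
  fix c
  have "mcomp (bas f) (bas g) c
      = (\<Sum>f'\<in>UNIV. if f' = f then (\<Sum>g'\<in>UNIV. if g' = g then bcomp f' g' c else 0) else 0)"
    unfolding mcomp_def cobs_UNIV bas_def by (intro sum.cong refl) (auto intro: sum.cong)
  also have "\<dots> = bcomp f g c"
    by (simp add: sum.delta[OF finite_cob])
  finally show "mcomp (bas f) (bas g) c = bcomp f g c" .
qed

lemma mcomp_assoc: "mcomp (mcomp F G) H = mcomp F (mcomp G H)"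
  by (simp add: mor_eq_iff mcomp_coeff algebra_simps)

lemma mcomp_add_left: "mcomp (F + G) H = mcomp F H + mcomp G H"
  and mcomp_add_right: "mcomp F (G + H) = mcomp F G + mcomp F H"
  and mcomp_diff_left: "mcomp (F - G) H = mcomp F H - mcomp G H"
  and mcomp_diff_right: "mcomp F (G - H) = mcomp F G - mcomp F H"
  and mcomp_minus_left: "mcomp (- F) H = - mcomp F H"
  and mcomp_minus_right: "mcomp F (- H) = - mcomp F H"
  and mcomp_scale_left: "mcomp (\<lambda>c. k * F c) H = (\<lambda>c. k * mcomp F H c)"
  and mcomp_scale_right: "mcomp F (\<lambda>c. k * H c) = (\<lambda>c. k * mcomp F H c)"
  by (simp_all add: mor_eq_iff mcomp_coeff algebra_simps)

lemma mcomp_zero_left [simp]: "mcomp 0 H = 0"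
  and mcomp_zero_right [simp]: "mcomp F 0 = 0"
  by (simp_all add: mor_eq_iff mcomp_coeff)

lemma mcomp_sum_left: "mcomp (\<Sum>i\<in>I. F i) H = (\<Sum>i\<in>I. mcomp (F i) H)"
proof (induction I rule: infinite_finite_induct)
  case (insert x I)
  then show ?case by (simp only: sum.insert[OF insert(1,2)] mcomp_add_left insert(3))
next
  case (infinite A)
  then show ?case by (simp only: sum.infinite[OF infinite] mcomp_zero_left)
qed (simp only: sum.empty mcomp_zero_left)

lemma mcomp_sum_right: "mcomp H (\<Sum>i\<in>I. F i) = (\<Sum>i\<in>I. mcomp H (F i))"
proof (induction I rule: infinite_finite_induct)
  case (insert x I)
  then show ?case by (simp only: sum.insert[OF insert(1,2)] mcomp_add_right insert(3))
next
  case (infinite A)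
  then show ?case by (simp only: sum.infinite[OF infinite] mcomp_zero_right)
qed (simp only: sum.empty mcomp_zero_right)

lemma hom_iff: "F \<in> hom X Y \<longleftrightarrow> (\<forall>c. src c \<noteq> X \<or> tgt c \<noteq> Y \<longrightarrow> F c = 0)"
  unfolding hom_def by auto

lemma homD: "F \<in> hom X Y \<Longrightarrow> src c \<noteq> X \<or> tgt c \<noteq> Y \<Longrightarrow> F c = 0"
  by (simp add: hom_iff)

lemma bas_hom: "bas c \<in> hom (src c) (tgt c)"
  by (simp add: hom_def bas_def)

lemma hom_zero [simp]: "0 \<in> hom X Y"
  and hom_add: "A \<in> hom X Y \<Longrightarrow> B \<in> hom X Y \<Longrightarrow> A + B \<in> hom X Y"
  and hom_diff: "A \<in> hom X Y \<Longrightarrow> B \<in> hom X Y \<Longrightarrow> A - B \<in> hom X Y"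
  and hom_minus: "A \<in> hom X Y \<Longrightarrow> - A \<in> hom X Y"
  and hom_scale: "A \<in> hom X Y \<Longrightarrow> (\<lambda>c. k * A c) \<in> hom X Y"
  by (simp_all add: hom_iff)

lemma hom_sum: "(\<And>i. i \<in> I \<Longrightarrow> A i \<in> hom X Y) \<Longrightarrow> (\<Sum>i\<in>I. A i) \<in> hom X Y"
  by (induction I rule: infinite_finite_induct) (auto intro: hom_add)

lemma hom_mcomp:
  assumes A: "A \<in> hom Y Z" and B: "B \<in> hom X Y"
  shows "mcomp A B \<in> hom X Z"
proof -
  note homD[OF A, simp] homD[OF B, simp]
  show ?thesis
    unfolding hom_iff all_cob by (cases X; cases Y; cases Z) (simp_all add: mcomp_coeff)
qed

definition sgn_mor :: "int \<Rightarrow> mor \<Rightarrow> mor" where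
  "sgn_mor a X = (if even a then X else - X)"

lemma sgn_int_times: "(\<lambda>c. sgn_int a * X c) = sgn_mor a X"
  by (auto simp: sgn_int_def sgn_mor_def)

lemma sgn_mor_mcomp_left: "mcomp (sgn_mor a X) Y = sgn_mor a (mcomp X Y)"
  and sgn_mor_mcomp_right: "mcomp Y (sgn_mor a X) = sgn_mor a (mcomp Y X)"
  by (simp_all add: sgn_mor_def mcomp_minus_left mcomp_minus_right)

lemma sgn_mor_sgn_mor: "sgn_mor a (sgn_mor b X) = sgn_mor (a + b) X"
  and sgn_mor_sgn_mor_self [simp]: "sgn_mor a (sgn_mor a X) = X"
  and sgn_mor_zero [simp]: "sgn_mor a 0 = 0"
  and sgn_mor_minus: "sgn_mor a (- X) = - sgn_mor a X"
  and sgn_mor_sum: "sgn_mor a (\<Sum>i\<in>I. Z i) = (\<Sum>i\<in>I. sgn_mor a (Z i))"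
  and sgn_mor_eq_iff: "sgn_mor a X = Y \<longleftrightarrow> X = sgn_mor a Y"
  and sgn_mor_eq_0_iff: "sgn_mor a X = 0 \<longleftrightarrow> X = 0"
  by (auto simp: sgn_mor_def sum_negf)

lemma sgn_mor_apply: "sgn_mor a X c = (if even a then X c else - X c)"
  by (simp add: sgn_mor_def)

lemma hom_sgn_mor: "A \<in> hom X Y \<Longrightarrow> sgn_mor a A \<in> hom X Y"
  by (simp add: sgn_mor_def hom_minus)

section \<open>Lifting along the differential of \<open>P\<^sub>2\<close>\<close>

lemma Cobj_simps [simp]: "Cobj 0 = One" "Cobj (Suc n) = E1" "0 < n \<Longrightarrow> Cobj n = E1"
  by (simp_all add: Cobj_def)

lemma dP_coeff [simp]:
  "dP 0 (Sd False) = 1" "dP 0 (Sd True) = 0" "dP 0 (D1 a b) = 0" "dP 0 (DE a b) = 0" "dP 0 (Sd' a) = 0"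
  "dP (Suc n) (DE True False) = 1" "dP (Suc n) (DE False True) = (if even n then -1 else 1)"
  "dP (Suc n) (DE False False) = 0" "dP (Suc n) (DE True True) = 0"
  "dP (Suc n) (D1 a b) = 0" "dP (Suc n) (Sd a) = 0" "dP (Suc n) (Sd' a) = 0"
  by (simp_all add: dP_def bas_def)

lemma dP_hom: "dP n \<in> hom (Cobj n) (Cobj (Suc n))"
  by (cases n) (simp_all add: hom_iff all_cob)

lemma dP_dP: "mcomp (dP (Suc n)) (dP n) = 0"
  by (cases n) (simp_all add: mor_eq_iff mcomp_coeff)

lemma dP_dP_mcomp: "mcomp (dP (Suc n)) (mcomp (dP n) H) = 0"
  by (simp add: mcomp_assoc[symmetric] dP_dP)

definition lift :: "nat \<Rightarrow> int \<Rightarrow> mor \<Rightarrow> mor" where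
  "lift m t X = (\<lambda>c.
     if t < 0 then 0
     else if t = 0 then
       (if m = 0 then (if c = Sd' False then X (D1 True False) else if c = Sd' True then X (D1 True True) else 0)
        else if c = Sd' False then X (Sd' True) div 2 else 0)
     else if m = 0 then (if c = DE False False then X (Sd False) else if c = DE True False then X (Sd True) else 0)
     else if c = DE False False then X (DE True False) else if c = DE False True then X (DE True True) else 0)"

text \<open>Among the maps \<open>X : C\<^sub>m \<rightarrow> C\<^sub>0\<close> with \<open>X \<circ> d\<^sub>m\<^sub>-\<^sub>1 = 0\<close>, those that factor through \<open>d\<^sub>m\<close>.
  For even \<open>m > 0\<close> the saddle precomposed with \<open>x\<^sub>t\<^sub>o\<^sub>p + x\<^sub>b\<^sub>o\<^sub>t\<close> is twice the dotted saddle: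
  this is where the 2-torsion comes from.\<close>
definition liftable :: "nat \<Rightarrow> mor \<Rightarrow> bool" where
  "liftable m X \<longleftrightarrow>
     (if m = 0 then X (D1 False False) = 0 \<and> X (D1 True False) = X (D1 False True)
      else if m = 1 then True
      else if even m then X (Sd' False) = 0 \<and> even (X (Sd' True))
      else X (Sd' True) = 0)"

lemma lift_zero [simp]: "lift m t 0 = 0"
  and lift_neg [simp]: "t < 0 \<Longrightarrow> lift m t X = 0"
  by (simp_all add: lift_def fun_eq_iff)

lemma lift_hom: "0 \<le> t \<Longrightarrow> lift m t X \<in> hom (Cobj (Suc m)) (Cobj (nat t))"
  unfolding hom_iff all_cob by (simp add: lift_def Cobj_def)

lemma lift_dP:
  assumes X: "X \<in> hom (Cobj m) (Cobj (nat t))" and t: "0 \<le> t"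
    and cyc: "0 < m \<Longrightarrow> mcomp X (dP (m - 1)) = 0"
    and obstr: "t = 0 \<Longrightarrow> liftable m X"
  shows "mcomp (lift m t X) (dP m) = X"
proof -
  note homD[OF X, simp]
  show ?thesis
  proof (cases m)
    case 0
    then show ?thesis using t obstr by (auto simp: mor_eq_iff mcomp_coeff lift_def liftable_def Cobj_def)
  next
    case (Suc k)
    with cyc have "mcomp X (dP k) = 0" by simp
    then show ?thesis using Suc t obstr
      by (cases k) (auto simp: mor_eq_iff mcomp_coeff lift_def liftable_def Cobj_def)
  qed
qed

section \<open>Homogeneous maps and the differential of \<open>End(P\<^sub>2)\<close>\<close>

lemma plus_endo_apply: "((F::endo) + G) d m = F d m + G d m"
  and minus_endo_apply: "((F::endo) - G) d m = F d m - G d m"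
  and zero_endo_apply: "(0::endo) d m = 0"
  by simp_all

abbreviation degrees :: "endo \<Rightarrow> int set" where
  "degrees F \<equiv> {d. F d \<noteq> 0}"

definition homogeneous :: "int \<Rightarrow> (nat \<Rightarrow> mor) \<Rightarrow> bool" where
  "homogeneous d g \<longleftrightarrow>
     (\<forall>m. if 0 \<le> int m + d then g m \<in> hom (Cobj m) (Cobj (nat (int m + d))) else g m = 0)"

lemma EndP_iff: "F \<in> EndP \<longleftrightarrow> finite (degrees F) \<and> (\<forall>d. homogeneous d (F d))"
  by (simp add: EndP_def homogeneous_def)

lemma homogeneous_hom: "homogeneous d g \<Longrightarrow> int n = int m + d \<Longrightarrow> g m \<in> hom (Cobj m) (Cobj n)"
  unfolding homogeneous_def by (metis nat_int of_nat_0_le_iff)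

lemma homogeneous_vanish: "homogeneous d g \<Longrightarrow> int m + d < 0 \<Longrightarrow> g m = 0"
  unfolding homogeneous_def by (metis not_le)

lemma homogeneous_zero: "homogeneous d 0"
  and homogeneous_add: "homogeneous d g \<Longrightarrow> homogeneous d h \<Longrightarrow> homogeneous d (g + h)"
  and homogeneous_diff: "homogeneous d g \<Longrightarrow> homogeneous d h \<Longrightarrow> homogeneous d (g - h)"
  and homogeneous_scale: "homogeneous d g \<Longrightarrow> homogeneous d (\<lambda>m x. c * g m x)"
  and homogeneous_sign: "homogeneous d g \<Longrightarrow> homogeneous d (\<lambda>m. if P then g m else - g m)"
  unfolding homogeneous_def
  by (auto intro: hom_add hom_diff hom_scale hom_minus split: if_splits)

lemma EndP_hom: "F \<in> EndP \<Longrightarrow> int n = int m + d \<Longrightarrow> F d m \<in> hom (Cobj m) (Cobj n)"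
  by (auto simp: EndP_iff intro: homogeneous_hom)

lemma EndP_vanish: "F \<in> EndP \<Longrightarrow> int m + d < 0 \<Longrightarrow> F d m = 0"
  by (auto simp: EndP_iff intro: homogeneous_vanish)

lemma EndP_zero: "0 \<in> EndP"
  by (simp add: EndP_iff homogeneous_zero)

lemma EndP_add: "F \<in> EndP \<Longrightarrow> G \<in> EndP \<Longrightarrow> F + G \<in> EndP"
  and EndP_diff: "F \<in> EndP \<Longrightarrow> G \<in> EndP \<Longrightarrow> F - G \<in> EndP"
proof -
  assume "F \<in> EndP" "G \<in> EndP"
  then have fin: "finite (degrees F \<union> degrees G)" and "\<And>d. homogeneous d (F d)" "\<And>d. homogeneous d (G d)"
    by (auto simp: EndP_iff)
  moreover have "degrees (F + G) \<subseteq> degrees F \<union> degrees G" "degrees (F - G) \<subseteq> degrees F \<union> degrees G"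
    by auto
  ultimately show "F + G \<in> EndP" "F - G \<in> EndP"
    by (auto simp: EndP_iff intro: finite_subset[OF _ fin] homogeneous_add homogeneous_diff)
qed

lemma degrees_smul: "degrees (smul c F) \<subseteq> degrees F"
  by (auto simp: smul_def fun_eq_iff)

lemma EndP_smul: "F \<in> EndP \<Longrightarrow> smul c F \<in> EndP"
  using finite_subset[OF degrees_smul]
  by (auto simp: EndP_iff smul_def intro: homogeneous_scale)

lemma smul_zero [simp]: "smul c 0 = 0"
  by (simp add: smul_def fun_eq_iff)

definition dEnd_comp :: "int \<Rightarrow> (nat \<Rightarrow> mor) \<Rightarrow> nat \<Rightarrow> mor" where
  "dEnd_comp d h m =
     (if 0 \<le> int m + d - 1 then mcomp (dP (nat (int m + d - 1))) (h m) else 0)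
     - sgn_mor (d - 1) (if 0 \<le> int m + d then mcomp (h (Suc m)) (dP m) else 0)"

lemma dEnd_eq: "dEnd F d m = dEnd_comp d (F (d - 1)) m"
  by (simp add: dEnd_def dEnd_comp_def sgn_int_times)

lemma dEnd_comp_add: "dEnd_comp d (\<lambda>m. g m + h m) m = dEnd_comp d g m + dEnd_comp d h m"
  and dEnd_comp_diff: "dEnd_comp d (\<lambda>m. g m - h m) m = dEnd_comp d g m - dEnd_comp d h m"
  and dEnd_comp_scale: "dEnd_comp d (\<lambda>m x. c * g m x) m = (\<lambda>x. c * dEnd_comp d g m x)"
  and dEnd_comp_zero: "dEnd_comp d 0 m = 0"
  by (simp_all add: mor_eq_iff dEnd_comp_def sgn_mor_def mcomp_coeff algebra_simps)

lemma dEnd_add: "dEnd (F + G) = dEnd F + dEnd G"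
proof (rule ext, rule ext)
  fix d m
  have "(F + G) (d - 1) = (\<lambda>m. F (d - 1) m + G (d - 1) m)" by auto
  then show "dEnd (F + G) d m = (dEnd F + dEnd G) d m"
    by (simp only: plus_fun_apply dEnd_eq dEnd_comp_add)
qed

lemma dEnd_diff: "dEnd (F - G) = dEnd F - dEnd G"
proof (rule ext, rule ext)
  fix d m
  have "(F - G) (d - 1) = (\<lambda>m. F (d - 1) m - G (d - 1) m)" by auto
  then show "dEnd (F - G) d m = (dEnd F - dEnd G) d m"
    by (simp only: minus_apply dEnd_eq dEnd_comp_diff)
qed

lemma dEnd_smul: "dEnd (smul c F) = smul c (dEnd F)"
  by (intro ext) (simp only: dEnd_eq smul_def dEnd_comp_scale)

lemma dEnd_vanish: "H (d - 1) = 0 \<Longrightarrow> dEnd H d = 0"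
  by (rule ext) (simp only: dEnd_eq dEnd_comp_zero zero_fun_apply)

lemma dEnd_zero: "dEnd 0 = 0"
  by (intro ext) (simp add: dEnd_vanish)

lemma degrees_dEnd: "degrees (dEnd H) \<subseteq> (\<lambda>e. e + 1) ` degrees H"
proof
  fix d assume "d \<in> degrees (dEnd H)"
  then have "H (d - 1) \<noteq> 0" using dEnd_vanish by auto
  then show "d \<in> (\<lambda>e. e + 1) ` degrees H"
    by (intro image_eqI[of _ _ "d - 1"]) auto
qed

lemma dEnd_EndP:
  assumes H: "H \<in> EndP"
  shows "dEnd H \<in> EndP"
proof -
  have "finite (degrees (dEnd H))"
    using H by (auto simp: EndP_iff intro: finite_subset[OF degrees_dEnd])
  moreover have "dEnd H d m \<in> hom (Cobj m) (Cobj n)" if n: "int n = int m + d" for d m n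
  proof -
    have "mcomp (H (d - 1) (Suc m)) (dP m) \<in> hom (Cobj m) (Cobj n)"
      using hom_mcomp[OF EndP_hom[OF H] dP_hom] n by simp
    moreover have "mcomp (dP (nat (int m + d - 1))) (H (d - 1) m) \<in> hom (Cobj m) (Cobj n)"
      if "0 \<le> int m + d - 1"
      using hom_mcomp[OF dP_hom EndP_hom[OF H, of "nat (int m + d - 1)" m "d - 1"]] n that by simp
    ultimately show ?thesis
      by (auto simp: dEnd_eq dEnd_comp_def sgn_mor_def intro: hom_diff hom_add hom_minus)
  qed
  moreover have "dEnd H d m = 0" if "int m + d < 0" for d m
    using that by (simp add: dEnd_eq dEnd_comp_def)
  ultimately show ?thesis
    by (auto simp: EndP_iff homogeneous_def)
qed

lemma Cyc_zero: "0 \<in> Cyc"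
  and Cyc_add: "F \<in> Cyc \<Longrightarrow> G \<in> Cyc \<Longrightarrow> F + G \<in> Cyc"
  and Cyc_diff: "F \<in> Cyc \<Longrightarrow> G \<in> Cyc \<Longrightarrow> F - G \<in> Cyc"
  and Cyc_smul: "F \<in> Cyc \<Longrightarrow> smul c F \<in> Cyc"
  by (simp_all add: Cyc_def EndP_zero EndP_add EndP_diff EndP_smul dEnd_zero dEnd_add dEnd_diff dEnd_smul)

lemma Cyc_sum: "(\<And>i. i \<in> I \<Longrightarrow> F i \<in> Cyc) \<Longrightarrow> (\<Sum>i\<in>I. F i) \<in> Cyc"
  by (induction I rule: infinite_finite_induct) (auto intro: Cyc_add Cyc_zero)

section \<open>Cycles that are boundaries\<close>

text \<open>Given a component \<open>g\<close> of degree \<open>d\<close> of a cycle, this builds \<open>h\<close> of degree \<open>d - 1\<close> with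
  \<open>dEnd_comp d h = g\<close> one source degree at a time: \<open>h (m + 1)\<close> lifts \<open>\<plusminus>(g m - d \<circ> h m)\<close> along \<open>d\<^sub>m\<close>.\<close>
primrec null_htpy :: "int \<Rightarrow> (nat \<Rightarrow> mor) \<Rightarrow> nat \<Rightarrow> mor" where
  "null_htpy d g 0 = 0"
| "null_htpy d g (Suc m) = sgn_mor d (lift m (int m + d)
     (g m - (if 0 \<le> int m + d - 1 then mcomp (dP (nat (int m + d - 1))) (null_htpy d g m) else 0)))"

definition residual :: "int \<Rightarrow> (nat \<Rightarrow> mor) \<Rightarrow> nat \<Rightarrow> mor" where
  "residual d g m =
     g m - (if 0 \<le> int m + d - 1 then mcomp (dP (nat (int m + d - 1))) (null_htpy d g m) else 0)"

lemma null_htpy_Suc: "null_htpy d g (Suc m) = sgn_mor d (lift m (int m + d) (residual d g m))"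
  by (simp add: residual_def)

declare null_htpy.simps(2) [simp del]

lemma null_htpy_zero: "null_htpy d 0 m = 0"
  by (induction m) (simp_all add: null_htpy_Suc residual_def)

lemma homogeneous_null_htpy: "homogeneous (d - 1) (null_htpy d g)"
  unfolding homogeneous_def
proof
  fix m
  show "if 0 \<le> int m + (d - 1) then null_htpy d g m \<in> hom (Cobj m) (Cobj (nat (int m + (d - 1))))
        else null_htpy d g m = 0"
  proof (cases m)
    case (Suc k)
    then show ?thesis using lift_hom[of "int k + d" k] by (auto simp: null_htpy_Suc hom_sgn_mor)
  qed simp
qed

lemma residual_hom:
  assumes g: "homogeneous d g" and n: "int n = int m + d"
  shows "residual d g m \<in> hom (Cobj m) (Cobj n)"
proof -
  have "mcomp (dP (nat (int m + d - 1))) (null_htpy d g m) \<in> hom (Cobj m) (Cobj n)"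
    if "0 \<le> int m + d - 1"
    using hom_mcomp[OF dP_hom homogeneous_hom[OF homogeneous_null_htpy]] n that by simp
  then show ?thesis
    using homogeneous_hom[OF g n] by (auto simp: residual_def intro: hom_diff)
qed

lemma residual_vanish: "homogeneous d g \<Longrightarrow> int m + d < 0 \<Longrightarrow> residual d g m = 0"
  by (simp add: residual_def homogeneous_vanish)

lemma residual_eq: "int m + d < 1 \<Longrightarrow> residual d g m = g m"
  by (simp add: residual_def)

lemma residual_mcomp_dP:
  assumes g: "homogeneous d g" and cyc: "dEnd_comp (d + 1) g m = 0"
    and lifted: "mcomp (lift m (int m + d) (residual d g m)) (dP m) = residual d g m"
  shows "mcomp (residual d g (Suc m)) (dP m) = 0"
proof (cases "0 \<le> int m + d")
  case True
  define n where "n = nat (int m + d)"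
  have lifted': "mcomp (null_htpy d g (Suc m)) (dP m) = sgn_mor d (residual d g m)"
    by (simp add: null_htpy_Suc sgn_mor_mcomp_left lifted)
  have "mcomp (dP n) (residual d g m) = mcomp (dP n) (g m)"
  proof (cases "0 \<le> int m + d - 1")
    case True
    then have "n = Suc (nat (int m + d - 1))" by (simp add: n_def)
    with True show ?thesis by (simp add: residual_def mcomp_diff_right dP_dP_mcomp)
  qed (simp add: residual_def)
  moreover have "mcomp (dP n) (g m) = sgn_mor d (mcomp (g (Suc m)) (dP m))"
    using cyc True by (simp add: dEnd_comp_def n_def sgn_mor_eq_iff)
  moreover have "mcomp (residual d g (Suc m)) (dP m)
      = mcomp (g (Suc m)) (dP m) - mcomp (dP n) (mcomp (null_htpy d g (Suc m)) (dP m))"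
    using True by (simp add: residual_def n_def mcomp_diff_left mcomp_assoc add.commute add.left_commute)
  ultimately show ?thesis
    by (simp add: lifted' sgn_mor_mcomp_right)
next
  case False
  then have "residual d g (Suc m) = g (Suc m)" by (simp add: residual_eq)
  moreover have "mcomp (g (Suc m)) (dP m) = 0"
  proof (cases "int m + d + 1 < 0")
    case True
    then show ?thesis using homogeneous_vanish[OF g, of "Suc m"] by simp
  qed (use cyc False in \<open>simp add: dEnd_comp_def sgn_mor_eq_0_iff\<close>)
  ultimately show ?thesis by simp
qed

lemma lift_residual:
  assumes g: "homogeneous d g" and cyc: "\<And>m. dEnd_comp (d + 1) g m = 0"
    and diag: "\<And>m. int m + d = 0 \<Longrightarrow> liftable m (g m)"
  shows "mcomp (lift m (int m + d) (residual d g m)) (dP m) = residual d g m"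
proof -
  have step: "mcomp (lift m (int m + d) (residual d g m)) (dP m) = residual d g m"
    if prev: "0 < m \<Longrightarrow> mcomp (residual d g m) (dP (m - 1)) = 0" for m
  proof (cases "0 \<le> int m + d")
    case True
    show ?thesis
      by (rule lift_dP[OF residual_hom[OF g] True prev])
        (use True diag in \<open>simp_all add: residual_eq\<close>)
  qed (simp add: residual_vanish[OF g])
  show ?thesis
  proof (induction m)
    case 0
    show ?case by (rule step) simp
  next
    case (Suc m)
    show ?case by (rule step) (simp add: residual_mcomp_dP[OF g cyc Suc.IH])
  qed
qed

lemma dEnd_comp_null_htpy:
  assumes g: "homogeneous d g" and cyc: "\<And>m. dEnd_comp (d + 1) g m = 0"
    and diag: "\<And>m. int m + d = 0 \<Longrightarrow> liftable m (g m)"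
  shows "dEnd_comp d (null_htpy d g) m = g m"
proof (cases "0 \<le> int m + d")
  case True
  then show ?thesis
    by (simp add: dEnd_comp_def null_htpy_Suc sgn_mor_mcomp_left lift_residual[OF assms])
      (simp add: residual_def sgn_mor_def)
qed (simp add: dEnd_comp_def homogeneous_vanish[OF g])

lemma boundary_if_liftable_diagonal:
  assumes F: "F \<in> EndP" "dEnd F = 0" and diag: "\<And>m. liftable m (F (- int m) m)"
  shows "F \<in> Bd"
proof -
  define H where "H e = null_htpy (e + 1) (F (e + 1))" for e
  have hom: "homogeneous d (F d)" for d
    using F by (simp add: EndP_iff)
  have cyc: "dEnd_comp (d + 1) (F d) m = 0" for d m
    using dEnd_eq[of F "d + 1" m] F by simp
  have "degrees H \<subseteq> (\<lambda>d. d - 1) ` degrees F"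
    by (auto simp: H_def null_htpy_zero intro!: image_eqI[where x = "_ + 1"])
  then have "H \<in> EndP"
    using F by (auto simp: EndP_iff H_def homogeneous_null_htpy[of "_ + 1", simplified]
        intro: finite_subset)
  moreover have "dEnd H = F"
  proof (intro ext)
    fix d m c
    have "liftable k (F d k)" if "int k + d = 0" for k
      using diag[of k] that by (simp add: add_eq_0_iff)
    then show "dEnd H d m c = F d m c"
      using dEnd_comp_null_htpy[OF hom cyc] by (simp add: dEnd_eq H_def)
  qed
  ultimately show ?thesis unfolding Bd_def by blast
qed

lemma liftable_diagonal_dEnd:
  assumes H: "H \<in> EndP"
  shows "liftable m (dEnd H (- int m) m)"
proof -
  have "H (- int m - 1) (Suc m) \<in> hom E1 One"
    using EndP_hom[OF H, of 0 "Suc m" "- int m - 1"] by simp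
  note homD[OF this, simp]
  show ?thesis
    by (cases m) (auto simp: liftable_def dEnd_eq dEnd_comp_def sgn_mor_def mcomp_coeff)
qed

theorem cycle_boundary_iff:
  assumes "F \<in> Cyc"
  shows "F \<in> Bd \<longleftrightarrow> (\<forall>m. liftable m (F (- int m) m))"
  using assms liftable_diagonal_dEnd boundary_if_liftable_diagonal
  by (auto simp: Cyc_def Bd_def)

section \<open>Composition and the Leibniz rule\<close>

lemma ecomp_eq_sum:
  assumes "finite S" "degrees G \<subseteq> S"
  shows "ecomp F G d m
    = (\<Sum>e\<in>S. if 0 \<le> int m + e then mcomp (F (d - e) (nat (int m + e))) (G e m) else 0)"
  unfolding ecomp_def by (rule sum.mono_neutral_left[OF assms]) auto

lemma ecomp_single_degree_right:
  assumes "\<And>e. e \<noteq> a \<Longrightarrow> G e = 0"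
  shows "ecomp F G d m = (if 0 \<le> int m + a then mcomp (F (d - a) (nat (int m + a))) (G a m) else 0)"
proof -
  have "degrees G \<subseteq> {a}" using assms by auto
  from ecomp_eq_sum[OF _ this] show ?thesis by simp
qed

lemma ecomp_add_left: "ecomp (F + F') G = ecomp F G + ecomp F' G"
proof (rule ext, rule ext)
  fix d m
  show "ecomp (F + F') G d m = (ecomp F G + ecomp F' G) d m"
    unfolding ecomp_def plus_endo_apply sum.distrib[symmetric]
    by (intro sum.cong) (simp_all add: mcomp_add_left)
qed

lemma sum_mor_apply: "(\<Sum>i\<in>I. (F i :: mor)) c = (\<Sum>i\<in>I. F i c)"
  by (induction I rule: infinite_finite_induct) auto

lemma ecomp_smul_left: "ecomp (smul c F) G = smul c (ecomp F G)"
proof (rule ext, rule ext, rule ext)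
  fix d m x
  show "ecomp (smul c F) G d m x = smul c (ecomp F G) d m x"
    unfolding ecomp_def smul_def sum_mor_apply sum_distrib_left
    by (intro sum.cong refl) (simp add: mcomp_scale_left)
qed

lemma ecomp_zero_left [simp]: "ecomp 0 G = 0"
proof (rule ext, rule ext)
  fix d m
  show "ecomp 0 G d m = 0 d m"
    unfolding ecomp_def zero_endo_apply by (simp cong: if_cong)
qed

lemma ecomp_sum_left: "ecomp (\<Sum>i\<in>I. F i) G = (\<Sum>i\<in>I. ecomp (F i) G)"
proof (induction I rule: infinite_finite_induct)
  case (insert x I)
  then show ?case by (simp only: sum.insert[OF insert(1,2)] ecomp_add_left insert(3))
next
  case (infinite A)
  then show ?case by (simp only: sum.infinite[OF infinite] ecomp_zero_left)
qed (simp only: sum.empty ecomp_zero_left)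

lemma ecomp_add_right:
  assumes "finite (degrees G)" "finite (degrees G')"
  shows "ecomp F (G + G') = ecomp F G + ecomp F G'"
proof (rule ext, rule ext)
  fix d m
  define S where "S = degrees G \<union> degrees G'"
  have S: "finite S" "degrees (G + G') \<subseteq> S" "degrees G \<subseteq> S" "degrees G' \<subseteq> S"
    using assms by (auto simp: S_def)
  show "ecomp F (G + G') d m = (ecomp F G + ecomp F G') d m"
    unfolding plus_endo_apply ecomp_eq_sum[OF S(1,2)] ecomp_eq_sum[OF S(1,3)] ecomp_eq_sum[OF S(1,4)]
      sum.distrib[symmetric]
    by (intro sum.cong refl) (simp add: mcomp_add_right)
qed

lemma ecomp_smul_right:
  assumes G: "finite (degrees G)"
  shows "ecomp F (smul c G) = smul c (ecomp F G)"
proof (rule ext, rule ext, rule ext)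
  fix d m x
  have "ecomp F (smul c G) d m x = (\<Sum>e\<in>degrees G.
      if 0 \<le> int m + e then mcomp (F (d - e) (nat (int m + e))) (smul c G e m) else 0) x"
    by (simp only: ecomp_eq_sum[OF G degrees_smul])
  also have "\<dots> = c * (\<Sum>e\<in>degrees G.
      if 0 \<le> int m + e then mcomp (F (d - e) (nat (int m + e))) (G e m) else 0) x"
    unfolding smul_def sum_mor_apply sum_distrib_left
    by (intro sum.cong refl) (simp add: mcomp_scale_right)
  also have "\<dots> = smul c (ecomp F G) d m x"
    by (simp only: smul_def ecomp_eq_sum[OF G order_refl])
  finally show "ecomp F (smul c G) d m x = smul c (ecomp F G) d m x" .
qed

lemma ecomp_zero_right [simp]: "ecomp F 0 = 0"
  by (intro ext) (simp add: ecomp_def)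

lemma degrees_ecomp: "degrees (ecomp F G) \<subseteq> (\<lambda>(a, b). a + b) ` (degrees F \<times> degrees G)"
proof
  fix d assume d: "d \<in> degrees (ecomp F G)"
  have "\<exists>e. G e \<noteq> 0 \<and> F (d - e) \<noteq> 0"
  proof (rule ccontr)
    assume "\<not> ?thesis"
    then have "ecomp F G d m = 0" for m
      unfolding ecomp_def by (intro sum.neutral) auto
    with d show False by auto
  qed
  then show "d \<in> (\<lambda>(a, b). a + b) ` (degrees F \<times> degrees G)"
    by (auto intro!: image_eqI[where x = "(d - _, _)"])
qed

lemma ecomp_EndP:
  assumes F: "F \<in> EndP" and G: "G \<in> EndP"
  shows "ecomp F G \<in> EndP"
proof -
  have "finite (degrees (ecomp F G))"
    using F G by (auto simp: EndP_iff intro: finite_subset[OF degrees_ecomp])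
  moreover have "ecomp F G d m \<in> hom (Cobj m) (Cobj n)" if n: "int n = int m + d" for d m n
    unfolding ecomp_def
  proof (intro hom_sum)
    fix e
    show "(if 0 \<le> int m + e then mcomp (F (d - e) (nat (int m + e))) (G e m) else 0) \<in> hom (Cobj m) (Cobj n)"
      using hom_mcomp[OF EndP_hom[OF F] EndP_hom[OF G]] n by simp
  qed
  moreover have "ecomp F G d m = 0" if "int m + d < 0" for d m
    unfolding ecomp_def using that by (intro sum.neutral) (simp add: EndP_vanish[OF F])
  ultimately show ?thesis
    by (auto simp: EndP_iff homogeneous_def)
qed

definition twist :: "endo \<Rightarrow> endo" where
  "twist F = (\<lambda>d m. sgn_mor d (F d m))"

lemma twist_twist: "twist (twist F) = F"
  by (simp add: twist_def)

lemma twist_EndP: "F \<in> EndP \<Longrightarrow> twist F \<in> EndP"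
proof -
  assume F: "F \<in> EndP"
  have "twist F d = 0 \<longleftrightarrow> F d = 0" for d
    by (cases "even d") (auto simp: twist_def sgn_mor_def fun_eq_iff)
  then have "degrees (twist F) = degrees F"
    by auto
  then show ?thesis
    using F by (simp add: EndP_iff twist_def sgn_mor_def homogeneous_sign)
qed

lemma dEnd_twist: "dEnd (twist F) d m = sgn_mor (d - 1) (dEnd F d m)"
  by (simp add: dEnd_eq dEnd_comp_def twist_def sgn_mor_def mcomp_minus_left mcomp_minus_right)

text \<open>Summand \<open>e\<close> of the Leibniz rule: the terms \<open>F \<circ> d \<circ> G\<close> coming from \<open>dEnd F\<close> and from
  \<open>dEnd G\<close> cancel, which needs \<open>F\<close> to vanish when its target degree is negative.\<close>
lemma dEnd_ecomp_term:
  assumes F: "F \<in> EndP"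
  shows "(if 0 \<le> int m + e then mcomp (dEnd F (d - e) (nat (int m + e))) (G e m) else 0)
      + (if 0 \<le> int m + (e + 1)
         then mcomp (twist F (d - (e + 1)) (nat (int m + (e + 1)))) (dEnd G (e + 1) m) else 0)
    = (if 0 \<le> int m + e \<and> 0 \<le> int m + d - 1
       then mcomp (dP (nat (int m + d - 1))) (mcomp (F (d - 1 - e) (nat (int m + e))) (G e m)) else 0)
      - sgn_mor (d - 1) (if 0 \<le> int m + d then
         (if 0 \<le> int m + 1 + e
          then mcomp (F (d - 1 - e) (nat (int m + 1 + e))) (mcomp (G e (Suc m)) (dP m)) else 0) else 0)"
proof -
  have idx: "d - (e + 1) = d - 1 - e" "d - e - 1 = d - 1 - e" "int m + (e + 1) = int m + 1 + e"
    "int m + (e + 1) - 1 = int m + e" "e + 1 - 1 = e" "d - 1 - e + e = d - 1"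
    by simp_all
  show ?thesis
  proof (cases "0 \<le> int m + e")
    case True
    define n where "n = nat (int m + e)"
    have idx': "nat (int m + 1 + e) = Suc n" "int n + (d - e) - 1 = int m + d - 1" "int n + (d - e) = int m + d"
      using True by (simp_all add: n_def)
    have vanish: "F (d - 1 - e) (Suc n) = 0" if "int m + d < 0"
      using EndP_vanish[OF F] that True by (simp add: n_def)
    show ?thesis
      unfolding n_def[symmetric] dEnd_eq dEnd_comp_def twist_def idx idx'
      using True vanish
      by (auto simp: n_def[symmetric] mcomp_diff_left mcomp_diff_right sgn_mor_mcomp_left sgn_mor_mcomp_right
          mcomp_assoc sgn_mor_sgn_mor)
  next
    case False
    have vanish: "F (d - 1 - e) 0 = 0" if "int m + d < 0" "int m + 1 + e = 0"
      using EndP_vanish[OF F, of 0 "d - 1 - e"] that by simp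
    show ?thesis
      unfolding dEnd_eq dEnd_comp_def twist_def idx
      using False vanish
      by (auto simp: mcomp_minus_right sgn_mor_minus sgn_mor_mcomp_left sgn_mor_mcomp_right sgn_mor_sgn_mor)
  qed
qed

theorem dEnd_ecomp:
  assumes F: "F \<in> EndP" and G: "G \<in> EndP"
  shows "dEnd (ecomp F G) = ecomp (dEnd F) G + ecomp (twist F) (dEnd G)"
proof (rule ext, rule ext)
  fix d m
  define S where "S = degrees G"
  have S: "finite S"
    using G by (simp add: EndP_iff S_def)
  define T1 where "T1 e = (if 0 \<le> int m + e \<and> 0 \<le> int m + d - 1
    then mcomp (dP (nat (int m + d - 1))) (mcomp (F (d - 1 - e) (nat (int m + e))) (G e m)) else 0)" for e
  define T3 where "T3 e = (if 0 \<le> int m + 1 + e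
    then mcomp (F (d - 1 - e) (nat (int m + 1 + e))) (mcomp (G e (Suc m)) (dP m)) else 0)" for e
  have "dEnd (ecomp F G) d m = (\<Sum>e\<in>S. T1 e) - sgn_mor (d - 1) (if 0 \<le> int m + d then (\<Sum>e\<in>S. T3 e) else 0)"
  proof -
    have "(\<Sum>e\<in>S. T1 e) = (if 0 \<le> int m + d - 1 then mcomp (dP (nat (int m + d - 1))) (ecomp F G (d - 1) m) else 0)"
      unfolding ecomp_def S_def T1_def mcomp_sum_right by (auto intro: sum.cong)
    moreover have "(\<Sum>e\<in>S. T3 e) = mcomp (ecomp F G (d - 1) (Suc m)) (dP m)"
      unfolding ecomp_def S_def T3_def mcomp_sum_left
      by (intro sum.cong refl) (simp add: mcomp_assoc add.commute add.left_commute)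
    ultimately show ?thesis
      by (simp add: dEnd_eq dEnd_comp_def)
  qed
  also have "\<dots> = (\<Sum>e\<in>S. T1 e - sgn_mor (d - 1) (if 0 \<le> int m + d then T3 e else 0))"
    by (simp add: sum_subtractf sgn_mor_sum)
  also have "\<dots> = (\<Sum>e\<in>S. (if 0 \<le> int m + e then mcomp (dEnd F (d - e) (nat (int m + e))) (G e m) else 0)
      + (if 0 \<le> int m + (e + 1)
         then mcomp (twist F (d - (e + 1)) (nat (int m + (e + 1)))) (dEnd G (e + 1) m) else 0))"
    unfolding T1_def T3_def dEnd_ecomp_term[OF F] ..
  also have "\<dots> = ecomp (dEnd F) G d m + ecomp (twist F) (dEnd G) d m"
  proof -
    have "finite ((\<lambda>e. e + 1) ` S)" "degrees (dEnd G) \<subseteq> (\<lambda>e. e + 1) ` S"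
      using S degrees_dEnd by (auto simp: S_def)
    moreover have "inj_on (\<lambda>e::int. e + 1) S"
      by (simp add: inj_on_def)
    ultimately show ?thesis
      by (simp add: sum.distrib ecomp_def[of "dEnd F"] S_def ecomp_eq_sum[of "(\<lambda>e. e + 1) ` S"] sum.reindex)
  qed
  finally show "dEnd (ecomp F G) d m = (ecomp (dEnd F) G + ecomp (twist F) (dEnd G)) d m"
    by (simp only: plus_endo_apply)
qed

lemma ecomp_dEnd_cycle: "H \<in> EndP \<Longrightarrow> G \<in> Cyc \<Longrightarrow> ecomp (dEnd H) G = dEnd (ecomp H G)"
  by (simp add: dEnd_ecomp Cyc_def)

lemma cycle_ecomp_dEnd: "F \<in> Cyc \<Longrightarrow> H \<in> EndP \<Longrightarrow> ecomp F (dEnd H) = dEnd (ecomp (twist F) H)"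
proof -
  assume "F \<in> Cyc" "H \<in> EndP"
  moreover from \<open>F \<in> Cyc\<close> have "dEnd (twist F) = 0"
    by (intro ext) (simp add: Cyc_def dEnd_twist)
  ultimately show ?thesis
    by (simp add: dEnd_ecomp twist_EndP twist_twist Cyc_def)
qed

section \<open>The generators\<close>

text \<open>\<open>gen \<delta> t\<close> has degree \<open>-\<delta>\<close>; its component \<open>C\<^sub>\<delta> \<rightarrow> C\<^sub>0\<close> is the identity (\<open>\<delta> = 0\<close>) or the
  saddle, its components \<open>C\<^sub>m\<^sub>+\<^sub>\<delta> \<rightarrow> C\<^sub>m\<close> (\<open>m \<ge> 1\<close>) are the identity of \<open>e\<^sub>1\<close>, each with a dot on the
  top arc if \<open>t\<close>. So \<open>u\<^sup>i = gen (2 i) False\<close>, \<open>u\<^sup>i b = gen (2 i) True\<close> and \<open>u\<^sup>i w = gen (2 i + 3) True\<close>.\<close>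
definition gen_comp :: "nat \<Rightarrow> bool \<Rightarrow> nat \<Rightarrow> mor" where
  "gen_comp \<delta> t m =
     (if m = \<delta> then (if \<delta> = 0 then bas (D1 t False) else bas (Sd' t))
      else if \<delta> < m then bas (DE t False) else 0)"

definition gen :: "nat \<Rightarrow> bool \<Rightarrow> endo" where
  "gen \<delta> t = (\<lambda>d m. if d = - int \<delta> then gen_comp \<delta> t m else 0)"

lemma gen_apply: "gen \<delta> t d = (if d = - int \<delta> then gen_comp \<delta> t else 0)"
  by (auto simp: gen_def)

lemma gen_comp_self: "gen_comp \<delta> t \<delta> = (if \<delta> = 0 then bas (D1 t False) else bas (Sd' t))"
  and gen_comp_above: "\<delta> < m \<Longrightarrow> gen_comp \<delta> t m = bas (DE t False)"
  and gen_comp_below: "m < \<delta> \<Longrightarrow> gen_comp \<delta> t m = 0"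
  by (simp_all add: gen_comp_def)

lemma gen_comp_mcomp:
  assumes "\<delta>2 \<le> m"
  shows "mcomp (gen_comp \<delta>1 t1 (m - \<delta>2)) (gen_comp \<delta>2 t2 m)
    = (if t1 \<and> t2 then 0 else gen_comp (\<delta>1 + \<delta>2) (t1 \<or> t2) m)"
proof -
  consider "m < \<delta>1 + \<delta>2" | "m = \<delta>1 + \<delta>2" | "\<delta>1 + \<delta>2 < m" by linarith
  then show ?thesis
  proof cases
    case 1
    then show ?thesis using assms by (simp add: gen_comp_below)
  next
    case 2
    then show ?thesis using assms
      by (cases t1; cases t2; cases "\<delta>1 = 0"; cases "\<delta>2 = 0")
        (simp_all add: gen_comp_self gen_comp_above mcomp_bas nd_def)
  next
    case 3
    then show ?thesis
      by (cases t1; cases t2) (simp_all add: gen_comp_above mcomp_bas)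
  qed
qed

lemma ecomp_gen:
  "ecomp (gen \<delta>1 t1) (gen \<delta>2 t2) = (if t1 \<and> t2 then 0 else gen (\<delta>1 + \<delta>2) (t1 \<or> t2))"
proof (intro ext)
  fix d m c
  have "ecomp (gen \<delta>1 t1) (gen \<delta>2 t2) d m =
      (if \<delta>2 \<le> m then mcomp (gen \<delta>1 t1 (d + int \<delta>2) (m - \<delta>2)) (gen_comp \<delta>2 t2 m) else 0)"
    by (subst ecomp_single_degree_right[where a = "- int \<delta>2"]) (auto simp: gen_def nat_diff_distrib)
  also have "\<dots> = (if t1 \<and> t2 then 0 else gen (\<delta>1 + \<delta>2) (t1 \<or> t2)) d m"
    by (auto simp: gen_def gen_comp_mcomp gen_comp_below)
  finally show "ecomp (gen \<delta>1 t1) (gen \<delta>2 t2) d m c = (if t1 \<and> t2 then 0 else gen (\<delta>1 + \<delta>2) (t1 \<or> t2)) d m c"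
    by simp
qed

lemma ecomp_gen_commute: "ecomp (gen \<delta> s) (gen \<epsilon> t) = ecomp (gen \<epsilon> t) (gen \<delta> s)"
  by (simp add: ecomp_gen add.commute conj_commute disj_commute)

lemma IdP_gen: "IdP = gen 0 False"
  and bP_gen: "bP = gen 0 True"
  and uP_gen: "uP = gen 2 False"
  and wP_gen: "wP = gen 3 True"
  by (auto simp: fun_eq_iff IdP_def bP_def uP_def wP_def gen_def gen_comp_def)

lemma epow_uP: "epow uP i = gen (2 * i) False"
  by (induction i) (simp_all add: IdP_gen uP_gen ecomp_gen)

lemma Phi_eq:
  "Phi p q r = (\<Sum>i\<le>degree p. smul (coeff p i) (gen (2 * i) False))
     + (\<Sum>i\<le>degree q. smul (coeff q i) (gen (2 * i + 3) True))
     + (\<Sum>i\<le>degree r. smul (coeff r i) (gen (2 * i) True))"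
  by (simp add: Phi_def pev_def epow_uP ecomp_sum_left ecomp_smul_left wP_gen bP_gen ecomp_gen)

lemma homogeneous_gen_comp: "homogeneous (- int \<delta>) (gen_comp \<delta> t)"
  unfolding homogeneous_def
  using bas_hom[of "D1 t False"] bas_hom[of "Sd' t"] bas_hom[of "DE t False"]
  by (auto simp: gen_comp_def Cobj_def)

lemma gen_EndP: "gen \<delta> t \<in> EndP"
proof -
  have "degrees (gen \<delta> t) \<subseteq> {- int \<delta>}"
    by (auto simp: gen_def)
  moreover have "homogeneous d (gen \<delta> t d)" for d
    by (simp add: gen_apply homogeneous_gen_comp homogeneous_zero)
  ultimately show ?thesis
    by (auto simp: EndP_iff intro: finite_subset)
qed

lemma dEnd_comp_gen_comp:
  assumes cyc: "even \<delta> \<or> t \<and> 3 \<le> \<delta>"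
  shows "dEnd_comp (1 - int \<delta>) (gen_comp \<delta> t) m = 0"
proof -
  have "m + 1 < \<delta> \<or> m + 1 = \<delta> \<or> m = \<delta> \<or> (\<exists>j. m = \<delta> + Suc j)"
    by presburger
  then consider "m + 1 < \<delta>" | "m + 1 = \<delta>" | "m = \<delta>" | j where "m = \<delta> + Suc j"
    by blast
  then show ?thesis
  proof cases
    case 1
    then show ?thesis by (simp add: dEnd_comp_def gen_comp_below)
  next
    case 2
    then obtain k where k: "m = Suc k" "even k \<longleftrightarrow> even \<delta>"
      using cyc by (cases m) auto
    then show ?thesis
      using 2 cyc by (cases t) (auto simp: dEnd_comp_def gen_comp_self mor_eq_iff mcomp_coeff bas_def sgn_mor_apply)
  next
    case 3
    then show ?thesis
      using cyc
      by (cases t; cases \<delta>)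
        (auto simp: dEnd_comp_def gen_comp_self gen_comp_above mor_eq_iff mcomp_coeff bas_def sgn_mor_apply)
  next
    case 4
    then have "nat (int m + (1 - int \<delta>) - 1) = Suc j" by simp
    then show ?thesis
      using 4 cyc
      by (cases t) (auto simp: dEnd_comp_def gen_comp_above mor_eq_iff mcomp_coeff bas_def sgn_mor_apply)
  qed
qed

lemma dEnd_gen:
  assumes "even \<delta> \<or> t \<and> 3 \<le> \<delta>"
  shows "dEnd (gen \<delta> t) = 0"
proof (rule ext, rule ext)
  fix d m
  show "dEnd (gen \<delta> t) d m = 0 d m"
    using dEnd_comp_gen_comp[OF assms, of m]
    by (cases "d = 1 - int \<delta>") (simp_all add: dEnd_eq gen_apply dEnd_comp_zero)
qed

lemma gen_Cyc: "even \<delta> \<or> t \<and> 3 \<le> \<delta> \<Longrightarrow> gen \<delta> t \<in> Cyc"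
  by (simp add: Cyc_def gen_EndP dEnd_gen)

lemma Phi_Cyc: "Phi p q r \<in> Cyc"
  unfolding Phi_eq by (intro Cyc_add Cyc_sum Cyc_smul gen_Cyc) simp_all

lemma sum_smul_gen_apply:
  "(\<Sum>i\<in>I. smul (a i) (gen (f i) t)) d m c = (\<Sum>i\<in>I. if d = - int (f i) then a i * gen_comp (f i) t m c else 0)"
proof (induction I rule: infinite_finite_induct)
  case (insert x I)
  then show ?case by (simp add: smul_def gen_def)
qed simp_all

lemma sum_if_double_eq:
  "(\<Sum>i\<le>N. if - int m = - int (2 * i) then g i else 0)
    = (if even m \<and> m div 2 \<le> N then g (m div 2) else (0::int))"
proof -
  have "- int m = - int (2 * i) \<longleftrightarrow> i = m div 2 \<and> even m" for i by presburger
  then have "(\<Sum>i\<le>N. if - int m = - int (2 * i) then g i else 0)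
      = (\<Sum>i\<le>N. if i = m div 2 then (if even m then g i else 0) else 0)"
    by (intro sum.cong refl) auto
  then show ?thesis by (simp add: sum.delta)
qed

lemma sum_if_double_plus_3_eq:
  "(\<Sum>i\<le>N. if - int m = - int (2 * i + 3) then g i else 0)
    = (if odd m \<and> 3 \<le> m \<and> (m - 3) div 2 \<le> N then g ((m - 3) div 2) else (0::int))"
proof -
  have "- int m = - int (2 * i + 3) \<longleftrightarrow> i = (m - 3) div 2 \<and> odd m \<and> 3 \<le> m" for i by presburger
  then have "(\<Sum>i\<le>N. if - int m = - int (2 * i + 3) then g i else 0)
      = (\<Sum>i\<le>N. if i = (m - 3) div 2 then (if odd m \<and> 3 \<le> m then g i else 0) else 0)"
    by (intro sum.cong refl) auto
  then show ?thesis by (simp add: sum.delta)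
qed

lemma Phi_diag:
  assumes "d = - int m"
  shows "Phi p q r d m c =
     (if m = 0 then coeff p 0 * bas (D1 False False) c + coeff r 0 * bas (D1 True False) c
      else if even m then coeff p (m div 2) * bas (Sd' False) c + coeff r (m div 2) * bas (Sd' True) c
      else if 3 \<le> m then coeff q ((m - 3) div 2) * bas (Sd' True) c
      else 0)"
proof -
  have "Phi p q r d m c =
      (if even m \<and> m div 2 \<le> degree p then coeff p (m div 2) * gen_comp (2 * (m div 2)) False m c else 0)
      + (if odd m \<and> 3 \<le> m \<and> (m - 3) div 2 \<le> degree q
         then coeff q ((m - 3) div 2) * gen_comp (2 * ((m - 3) div 2) + 3) True m c else 0)
      + (if even m \<and> m div 2 \<le> degree r then coeff r (m div 2) * gen_comp (2 * (m div 2)) True m c else 0)"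
    unfolding assms Phi_eq plus_endo_apply plus_fun_apply sum_smul_gen_apply
      sum_if_double_eq sum_if_double_plus_3_eq
    by simp
  moreover have "even m \<Longrightarrow> 2 * (m div 2) = m" "odd m \<Longrightarrow> 3 \<le> m \<Longrightarrow> 2 * ((m - 3) div 2) + 3 = m"
    by presburger+
  ultimately show ?thesis
    by (auto simp: gen_comp_self coeff_eq_0)
qed

section \<open>The homology\<close>

lemma pCons_0_2_dvd_iff: "[:0, 2:] dvd (r :: int poly) \<longleftrightarrow> coeff r 0 = 0 \<and> (\<forall>k. even (coeff r k))"
proof
  assume "[:0, 2:] dvd r"
  then obtain s where "r = pCons 0 (smult 2 s)"
    by (auto simp: dvd_def mult_pCons_left)
  then show "coeff r 0 = 0 \<and> (\<forall>k. even (coeff r k))"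
    by (auto simp: coeff_pCons split: nat.split)
next
  assume r: "coeff r 0 = 0 \<and> (\<forall>k. even (coeff r k))"
  obtain a r' where r': "r = pCons a r'"
    by (cases r)
  define s where "s = map_poly (\<lambda>x. x div 2) r'"
  have "2 * (coeff r' k div 2) = coeff r' k" for k
    using r[THEN conjunct2, rule_format, of "Suc k"] by (simp add: r')
  then have "r' = smult 2 s"
    by (intro poly_eqI) (simp add: s_def coeff_map_poly)
  moreover have "a = 0"
    using r by (simp add: r')
  ultimately have "r = [:0, 2:] * s"
    by (simp add: r' mult_pCons_left)
  then show "[:0, 2:] dvd r" ..
qed

lemma ex_poly_coeff: "(\<And>i. N < i \<Longrightarrow> f i = (0::int)) \<Longrightarrow> \<exists>p. \<forall>i. coeff p i = f i"
  by (metis coeff_Abs_poly)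

lemma liftable_Phi_diag_iff:
  "(\<forall>m. liftable m (Phi p q r (- int m) m)) \<longleftrightarrow>
     p = 0 \<and> q = 0 \<and> coeff r 0 = 0 \<and> (\<forall>k. even (coeff r k))"
proof
  assume lift: "\<forall>m. liftable m (Phi p q r (- int m) m)"
  have "coeff p 0 = 0 \<and> coeff r 0 = 0"
    using lift[rule_format, of 0] by (simp add: liftable_def Phi_diag bas_def)
  moreover have "coeff p k = 0 \<and> even (coeff r k)" if "0 < k" for k
    using lift[rule_format, of "2 * k"] that by (simp add: liftable_def Phi_diag bas_def)
  moreover have "coeff q k = 0" for k
    using lift[rule_format, of "2 * k + 3"] by (simp add: liftable_def Phi_diag bas_def)
  ultimately show "p = 0 \<and> q = 0 \<and> coeff r 0 = 0 \<and> (\<forall>k. even (coeff r k))"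
    by (metis bot_nat_0.not_eq_extremum even_zero poly_eqI coeff_0)
next
  assume "p = 0 \<and> q = 0 \<and> coeff r 0 = 0 \<and> (\<forall>k. even (coeff r k))"
  then show "\<forall>m. liftable m (Phi p q r (- int m) m)"
    by (auto simp: liftable_def Phi_diag bas_def)
qed

theorem Phi_boundary_iff: "Phi p q r \<in> Bd \<longleftrightarrow> p = 0 \<and> q = 0 \<and> [:0, 2:] dvd r"
  by (simp add: cycle_boundary_iff[OF Phi_Cyc] liftable_Phi_diag_iff pCons_0_2_dvd_iff)

lemma EndP_low_degrees_vanish:
  assumes "F \<in> EndP"
  obtains N where "\<And>k. N < k \<Longrightarrow> F (- int k) = 0"
proof -
  have "bdd_below (degrees F)"
    using assms by (simp add: EndP_iff bdd_below_finite)
  then obtain b where "\<And>d. F d \<noteq> 0 \<Longrightarrow> b \<le> d"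
    by (auto simp: bdd_below_def)
  then have "F (- int k) = 0" if "nat (- b) < k" for k
    using that by force
  then show ?thesis using that by blast
qed

theorem cycle_homologous_Phi:
  assumes F: "F \<in> Cyc"
  shows "\<exists>p q r. F - Phi p q r \<in> Bd"
proof -
  obtain N where N: "\<And>k. N < k \<Longrightarrow> F (- int k) = 0"
    using F EndP_low_degrees_vanish by (auto simp: Cyc_def)
  have "\<exists>p. \<forall>k. coeff p k = (if k = 0 then F 0 0 (D1 False False) else F (- int (2 * k)) (2 * k) (Sd' False))"
  proof (rule ex_poly_coeff)
    fix k assume "N < k"
    then show "(if k = 0 then F 0 0 (D1 False False) else F (- int (2 * k)) (2 * k) (Sd' False)) = 0"
      using N[of "2 * k"] by simp
  qed
  then obtain p where p: "\<And>k. coeff p k =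
      (if k = 0 then F 0 0 (D1 False False) else F (- int (2 * k)) (2 * k) (Sd' False))"
    by blast
  have "\<exists>r. \<forall>k. coeff r k = (if k = 0 then F 0 0 (D1 True False) - F 0 0 (D1 False True)
      else F (- int (2 * k)) (2 * k) (Sd' True))"
  proof (rule ex_poly_coeff)
    fix k assume "N < k"
    then show "(if k = 0 then F 0 0 (D1 True False) - F 0 0 (D1 False True)
        else F (- int (2 * k)) (2 * k) (Sd' True)) = 0"
      using N[of "2 * k"] by simp
  qed
  then obtain r where r: "\<And>k. coeff r k = (if k = 0 then F 0 0 (D1 True False) - F 0 0 (D1 False True)
      else F (- int (2 * k)) (2 * k) (Sd' True))"
    by blast
  have "\<exists>q. \<forall>k. coeff q k = F (- int (2 * k + 3)) (2 * k + 3) (Sd' True)"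
  proof (rule ex_poly_coeff)
    fix k assume "N < k"
    then show "F (- int (2 * k + 3)) (2 * k + 3) (Sd' True) = 0"
      using N[of "2 * k + 3"] by simp
  qed
  then obtain q where q: "\<And>k. coeff q k = F (- int (2 * k + 3)) (2 * k + 3) (Sd' True)"
    by blast
  have "liftable m ((F - Phi p q r) (- int m) m)" for m
  proof -
    consider "m = 0" | "even m" "0 < m" | "odd m" by auto
    then show ?thesis
    proof cases
      case 2
      then have "2 * (m div 2) = m" "m div 2 \<noteq> 0" by auto
      then show ?thesis using 2 by (simp add: liftable_def minus_endo_apply Phi_diag bas_def p r)
    next
      case 3
      moreover have "3 \<le> m \<Longrightarrow> 2 * ((m - 3) div 2) + 3 = m" "m = 1 \<or> 3 \<le> m"
        using 3 by presburger+
      ultimately show ?thesis by (auto simp: liftable_def minus_endo_apply Phi_diag bas_def q)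
    qed (simp add: liftable_def minus_endo_apply Phi_diag bas_def p r)
  qed
  then have "F - Phi p q r \<in> Bd"
    using cycle_boundary_iff[OF Cyc_diff[OF F Phi_Cyc]] by blast
  then show ?thesis by blast
qed

fun gen_comb :: "(int \<times> nat \<times> bool) list \<Rightarrow> endo" where
  "gen_comb [] = 0"
| "gen_comb ((c, \<delta>, t) # xs) = smul c (gen \<delta> t) + gen_comb xs"

definition gen_span :: "endo set" where
  "gen_span = range gen_comb"

lemma gen_comb_EndP: "gen_comb xs \<in> EndP"
  by (induction xs rule: gen_comb.induct) (simp_all del: plus_fun_apply add: EndP_zero EndP_add EndP_smul gen_EndP)

lemma finite_degrees_gen_comb: "finite (degrees (gen_comb xs))"
  using gen_comb_EndP by (simp add: EndP_iff)

lemma gen_comb_append: "gen_comb (xs @ ys) = gen_comb xs + gen_comb ys"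
  by (induction xs rule: gen_comb.induct) (simp_all add: add.assoc)

lemma gen_span_add: "X \<in> gen_span \<Longrightarrow> Y \<in> gen_span \<Longrightarrow> X + Y \<in> gen_span"
proof -
  assume "X \<in> gen_span" "Y \<in> gen_span"
  then obtain xs ys where "X = gen_comb xs" "Y = gen_comb ys"
    by (auto simp: gen_span_def)
  then have "X + Y = gen_comb (xs @ ys)"
    by (simp only: gen_comb_append)
  then show ?thesis
    by (simp add: gen_span_def)
qed

lemma zero_gen_span: "0 \<in> gen_span"
  unfolding gen_span_def by (rule range_eqI[where x = "[]"]) simp

lemma gen_span_sum: "(\<And>i. i \<in> I \<Longrightarrow> X i \<in> gen_span) \<Longrightarrow> (\<Sum>i\<in>I. X i) \<in> gen_span"
  by (induction I rule: infinite_finite_induct) (auto intro: gen_span_add zero_gen_span)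

lemma smul_gen_span: "smul c (gen \<delta> t) \<in> gen_span"
  unfolding gen_span_def using gen_comb.simps(2)[of c \<delta> t "[]"] by (metis add_0_right gen_comb.simps(1) rangeI)

lemma Phi_gen_span: "Phi p q r \<in> gen_span"
  unfolding Phi_eq by (intro gen_span_add gen_span_sum smul_gen_span)

lemma ecomp_gen_gen_comb_commute: "ecomp (gen \<delta> s) (gen_comb ys) = ecomp (gen_comb ys) (gen \<delta> s)"
  by (induction ys rule: gen_comb.induct)
    (simp_all del: plus_fun_apply
      add: ecomp_add_right ecomp_add_left ecomp_smul_right ecomp_smul_left ecomp_gen_commute
      finite_degrees_gen_comb finite_subset[OF degrees_smul] gen_EndP[unfolded EndP_iff])

lemma gen_comb_commute: "ecomp (gen_comb xs) (gen_comb ys) = ecomp (gen_comb ys) (gen_comb xs)"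
  by (induction xs rule: gen_comb.induct)
    (simp_all del: plus_fun_apply add: ecomp_add_right ecomp_add_left ecomp_smul_right ecomp_smul_left
      ecomp_gen_gen_comb_commute finite_degrees_gen_comb finite_subset[OF degrees_smul] gen_EndP[unfolded EndP_iff])

lemma gen_span_commute: "X \<in> gen_span \<Longrightarrow> Y \<in> gen_span \<Longrightarrow> ecomp X Y = ecomp Y X"
  unfolding gen_span_def using gen_comb_commute by blast

lemma gen_span_EndP: "X \<in> gen_span \<Longrightarrow> X \<in> EndP"
  unfolding gen_span_def using gen_comb_EndP by blast

lemma ecomp_cycle_plus_boundary:
  assumes A: "A \<in> Cyc" and H: "H \<in> EndP" and G: "G \<in> Cyc"
    and B: "B \<in> EndP" and H': "H' \<in> EndP" and G_eq: "G = B + dEnd H'"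
  shows "ecomp (A + dEnd H) G = ecomp A B + dEnd (ecomp (twist A) H' + ecomp H G)"
proof -
  have "ecomp (A + dEnd H) G = ecomp A B + ecomp A (dEnd H') + ecomp (dEnd H) G"
    using B dEnd_EndP[OF H'] unfolding G_eq
    by (simp add: ecomp_add_left ecomp_add_right EndP_iff)
  also have "\<dots> = ecomp A B + dEnd (ecomp (twist A) H') + dEnd (ecomp H G)"
    using cycle_ecomp_dEnd[OF A H'] ecomp_dEnd_cycle[OF H G] by simp
  finally show ?thesis
    by (simp add: dEnd_add add.assoc)
qed

theorem cycles_commute_mod_boundaries:
  assumes F: "F \<in> Cyc" and G: "G \<in> Cyc"
  shows "ecomp F G - ecomp G F \<in> Bd"
proof -
  obtain A H1 where A: "A \<in> gen_span" "A \<in> Cyc" and H1: "H1 \<in> EndP" "F = A + dEnd H1"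
    using cycle_homologous_Phi[OF F] Phi_gen_span Phi_Cyc unfolding Bd_def
    by (metis add_diff_cancel_left' add_diff_eq imageE)
  obtain B H2 where B: "B \<in> gen_span" "B \<in> Cyc" and H2: "H2 \<in> EndP" "G = B + dEnd H2"
    using cycle_homologous_Phi[OF G] Phi_gen_span Phi_Cyc unfolding Bd_def
    by (metis add_diff_cancel_left' add_diff_eq imageE)
  define X where "X = ecomp (twist A) H2 + ecomp H1 G"
  define Y where "Y = ecomp (twist B) H1 + ecomp H2 F"
  have "ecomp F G = ecomp A B + dEnd X" "ecomp G F = ecomp B A + dEnd Y"
    using ecomp_cycle_plus_boundary[OF A(2) H1(1) G _ H2] ecomp_cycle_plus_boundary[OF B(2) H2(1) F _ H1]
      A B by (simp_all add: X_def Y_def H1(2) H2(2) gen_span_EndP)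
  then have "ecomp F G - ecomp G F = dEnd (X - Y)"
    by (simp add: gen_span_commute[OF A(1) B(1)] dEnd_diff)
  moreover have "A \<in> EndP" "B \<in> EndP" "F \<in> EndP" "G \<in> EndP"
    using A B F G by (simp_all add: Cyc_def)
  then have "X - Y \<in> EndP"
    unfolding X_def Y_def by (intro EndP_add EndP_diff ecomp_EndP twist_EndP H1(1) H2(1))
  ultimately show ?thesis
    unfolding Bd_def by blast
qed

theorem mainTheorem8:
  shows "(bP \<in> Cyc \<and> uP \<in> Cyc \<and> wP \<in> Cyc \<and> IdP \<in> Cyc)
    \<and> (\<forall>F\<in>Cyc. \<exists>p q r. F - Phi p q r \<in> Bd)
    \<and> (\<forall>p q r. Phi p q r \<in> Bd \<longleftrightarrow> (p = 0 \<and> q = 0 \<and> [:0, 2:] dvd r))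
    \<and> (\<forall>F\<in>Cyc. \<forall>G\<in>Cyc. ecomp F G - ecomp G F \<in> Bd)
    \<and> (ecomp wP bP \<in> Bd \<and> ecomp bP bP \<in> Bd \<and> ecomp wP wP \<in> Bd)"
proof -
  have "0 \<in> Bd"
    using dEnd_zero EndP_zero unfolding Bd_def by (metis image_eqI)
  then show ?thesis
    by (simp add: bP_gen uP_gen wP_gen IdP_gen gen_Cyc ecomp_gen cycle_homologous_Phi Phi_boundary_iff
        cycles_commute_mod_boundaries)
qed

end
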